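(* For every $\delta>0$ there exists $p=\Theta(1/\sqrt n)$ such that the public-key encryption scheme $(\mathsf{Gen},\mathsf{Enc},\mathsf{Dec})$ described in the context, with parameter $p$, is $(1-\delta)$-correct: for every $\mu\in\{0,1\}$, $\Pr[\mathsf{Dec}(\mathsf{sk},\mathsf{ct})=\mu : (\mathsf{pk},\mathsf{sk})\leftarrow\mathsf{Gen}(1^n),\ \mathsf{ct}\leftarrow\mathsf{Enc}(\mathsf{pk},\mu)]\ge 1-\delta.$
   Context: Symplectic inner product on $\mathbb{Z}_2^{2n}$: $(\mathbf a,\mathbf b)\odot(\mathbf a',\mathbf b')=\mathbf a\cdot\mathbf b'+\mathbf a'\cdot\mathbf b\pmod2$; for $\mathbf f\in\mathbb{Z}_2^{2n}$ and a matrix $\mathbf A$ with $2n$ rows, $\mathbf f\odot\mathbf A$ is the row vector whose $j$-th entry is $\mathbf f\odot(\text{$j$-th column of }\mathbf A)$. A "random full-rank isotropic matrix" $\mathbf A\in\mathbb{Z}_2^{2n\times n}$ is uniform among matrices of column rank $n$ whose columns are pairwise symplectically orthogonal. $\mathcal{D}_p^{\otimes n}$: random $\mathbf e\in\mathbb{Z}_2^{2n}$ with independent pairs $(e_j,e_{n+j})$, each $(0,0)$ w.p. $1-p$ and each of $(0,1),(1,0),(1,1)$ w.p. $p/3$. The scheme (security parameter $n$): $\mathsf{Gen}(1^n)$ samples a random full-rank isotropic $\mathbf A\in\mathbb{Z}_2^{2n\times n}$, $\mathbf x\sim\mathbb{Z}_2^n$ uniform, $\mathbf e\sim\mathcal{D}_p^{\otimes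 n}$, and outputs $\mathsf{pk}=(\mathbf A,\mathbf b=\mathbf A\mathbf x+\mathbf e)$, $\mathsf{sk}=\mathbf x$. $\mathsf{Enc}(\mathsf{pk},\mu)$ for $\mu\in\{0,1\}$ samples fresh $\mathbf f\sim\mathcal{D}_p^{\otimes n}$ and outputs $\mathsf{ct}=(\mathbf f\odot\mathbf A,\ \mathbf f\odot\mathbf b+\mu)$. $\mathsf{Dec}(\mathsf{sk},(\mathbf u,c))$ outputs $c+\mathbf u\cdot\mathbf x \pmod 2$ (standard dot product). *)

theory Defs
  imports "HOL-Probability.Probability" "HOL-Library.Landau_Symbols" "HOL-Library.Z2"
begin

text \<open>Vectors in Z_2^m are functions nat => bit (entries at indices >= m are 0);
  a 2n x n matrix is a function nat => nat => bit (row, column).\<close>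

type_synonym vec = "nat \<Rightarrow> bit"
type_synonym mat = "nat \<Rightarrow> nat \<Rightarrow> bit"

definition vecs :: "nat \<Rightarrow> vec set" where
  "vecs m = {v. \<forall>i\<ge>m. v i = 0}"

definition mats :: "nat \<Rightarrow> nat \<Rightarrow> mat set" where
  "mats r c = {A. \<forall>i j. (r \<le> i \<or> c \<le> j) \<longrightarrow> A i j = 0}"

definition sympl :: "nat \<Rightarrow> vec \<Rightarrow> vec \<Rightarrow> bit" where
  "sympl n a b = (\<Sum>j<n. a j * b (n + j) + b j * a (n + j))"

definition col :: "mat \<Rightarrow> nat \<Rightarrow> vec" where
  "col A j = (\<lambda>i. A i j)"

definition full_col_rank :: "nat \<Rightarrow> mat \<Rightarrow> bool" where
  "full_col_rank n A \<longleftrightarrow>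
     (\<forall>c \<in> vecs n. (\<forall>i<2*n. (\<Sum>j<n. c j * A i j) = 0) \<longrightarrow> (\<forall>j<n. c j = 0))"

definition isotropic :: "nat \<Rightarrow> mat \<Rightarrow> bool" where
  "isotropic n A \<longleftrightarrow> (\<forall>j<n. \<forall>k<n. sympl n (col A j) (col A k) = 0)"

definition iso_full_rank :: "nat \<Rightarrow> mat set" where
  "iso_full_rank n = {A \<in> mats (2*n) n. full_col_rank n A \<and> isotropic n A}"

definition mat_vec :: "nat \<Rightarrow> mat \<Rightarrow> vec \<Rightarrow> vec" where
  "mat_vec n A x = (\<lambda>i. if i < 2*n then (\<Sum>j<n. A i j * x j) else 0)"

text \<open>Single-qubit depolarizing-type noise on a pair (e_j, e_{n+j}).\<close>
definition pauli_pmf :: "real \<Rightarrow> (bit \<times> bit) pmf" where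
  "pauli_pmf p = do { nz \<leftarrow> bernoulli_pmf p;
                      if nz then pmf_of_set {(0,1),(1,0),(1,1)} else return_pmf (0,0) }"

definition noise :: "real \<Rightarrow> nat \<Rightarrow> vec pmf" where
  "noise p n = map_pmf
     (\<lambda>P i. if i < n then fst (P i) else if i < 2*n then snd (P (i - n)) else 0)
     (Pi_pmf {..<n} (0,0) (\<lambda>_. pauli_pmf p))"

definition Gen :: "real \<Rightarrow> nat \<Rightarrow> ((mat \<times> vec) \<times> vec) pmf" where
  "Gen p n = do {
     A \<leftarrow> pmf_of_set (iso_full_rank n);
     x \<leftarrow> pmf_of_set (vecs n);
     e \<leftarrow> noise p n;
     return_pmf ((A, \<lambda>i. mat_vec n A x i + e i), x) }"

definition Enc :: "real \<Rightarrow> nat \<Rightarrow> mat \<times> vec \<Rightarrow> bit \<Rightarrow> (vec \<times> bit) pmf" where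
  "Enc p n pk \<mu> = (case pk of (A, b) \<Rightarrow> do {
     f \<leftarrow> noise p n;
     return_pmf (\<lambda>j. if j < n then sympl n f (col A j) else 0, sympl n f b + \<mu>) })"

definition Dec :: "nat \<Rightarrow> vec \<Rightarrow> vec \<times> bit \<Rightarrow> bit" where
  "Dec n x ct = (case ct of (u, c) \<Rightarrow> c + (\<Sum>j<n. u j * x j))"

end

theory Submission
  imports Defs
begin

text \<open>Decryption returns \<open>\<mu> + f \<odot> e\<close>: the terms \<open>f \<odot> (A x)\<close> cancel
  against \<open>(f \<odot> A) \<cdot> x\<close>, whatever the matrix \<open>A\<close> and the secret \<open>x\<close>.
  The symplectic product \<open>f \<odot> e\<close> can only be nonzero if \<open>e\<close> and \<open>f\<close> are both
  nontrivial on a common coordinate pair \<open>j\<close>, which for independent noise happens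
  with probability \<open>p\<^sup>2\<close> for each \<open>j\<close>. By the union bound decryption fails with
  probability at most \<open>n p\<^sup>2\<close>, which is at most \<open>\<delta>\<close> for \<open>p = c / \<surd>n\<close> with
  \<open>c = min 1 \<surd>\<delta>\<close>.\<close>

text \<open>Reason in \<open>bit\<close> as the field \<open>\<int>\<^sub>2\<close>, not via XOR/AND.\<close>
declare add_bit_eq_xor [simp del] mult_bit_eq_and [simp del]

lemma bit_add_self [simp]: "(a::bit) + a = 0"
  by (cases a) simp_all

lemma sympl_add_right: "sympl n f (\<lambda>i. a i + b i) = sympl n f a + sympl n f b"
  unfolding sympl_def by (simp add: sum.distrib[symmetric] algebra_simps)

lemma sympl_mat_vec: "sympl n f (mat_vec n A x) = (\<Sum>j<n. sympl n f (col A j) * x j)"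
proof -
  have "sympl n f (mat_vec n A x)
      = (\<Sum>k<n. f k * (\<Sum>j<n. A (n + k) j * x j) + (\<Sum>j<n. A k j * x j) * f (n + k))"
    unfolding sympl_def mat_vec_def by (intro sum.cong) auto
  also have "\<dots> = (\<Sum>k<n. \<Sum>j<n. (f k * A (n + k) j + A k j * f (n + k)) * x j)"
    by (simp add: sum_distrib_left sum_distrib_right sum.distrib[symmetric] algebra_simps)
  also have "\<dots> = (\<Sum>j<n. \<Sum>k<n. (f k * A (n + k) j + A k j * f (n + k)) * x j)"
    by (rule sum.swap)
  also have "\<dots> = (\<Sum>j<n. sympl n f (col A j) * x j)"
    unfolding sympl_def col_def by (simp add: sum_distrib_right)
  finally show ?thesis .
qed

lemma Dec_ciphertext:
  "Dec n x (\<lambda>j. if j < n then sympl n f (col A j) else 0,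
            sympl n f (\<lambda>i. mat_vec n A x i + e i) + \<mu>)
   = sympl n f e + \<mu>"
proof -
  have "(\<Sum>j<n. (if j < n then sympl n f (col A j) else 0) * x j) = sympl n f (mat_vec n A x)"
    by (simp add: sympl_mat_vec)
  then show ?thesis
    unfolding Dec_def sympl_add_right by (simp add: algebra_simps)
qed

lemma Gen_Enc_Dec_eq:
  "do { (pk, sk) \<leftarrow> Gen p n; ct \<leftarrow> Enc p n pk \<mu>; return_pmf (Dec n sk ct) }
   = map_pmf (\<lambda>(e, f). sympl n f e + \<mu>) (pair_pmf (noise p n) (noise p n))"
  unfolding Gen_def Enc_def pair_pmf_def
  by (simp add: map_bind_pmf bind_assoc_pmf bind_return_pmf Dec_ciphertext)

definition nontrivial_at :: "nat \<Rightarrow> nat \<Rightarrow> vec set" where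
  "nontrivial_at n j = {v. (v j, v (n + j)) \<noteq> (0, 0)}"

lemma sympl_nonzero_imp_common_nontrivial_at:
  assumes "sympl n f e \<noteq> 0"
  shows "\<exists>j<n. f \<in> nontrivial_at n j \<and> e \<in> nontrivial_at n j"
proof (rule ccontr)
  assume "\<not> ?thesis"
  then have "\<forall>j<n. f j * e (n + j) + e j * f (n + j) = 0"
    unfolding nontrivial_at_def by auto
  then have "sympl n f e = 0"
    unfolding sympl_def by simp
  with assms show False ..
qed

lemma map_pmf_pauli_nontrivial:
  assumes "0 \<le> p" "p \<le> 1"
  shows "map_pmf (\<lambda>z. z \<noteq> (0, 0)) (pauli_pmf p) = bernoulli_pmf p"
proof -
  have "map_pmf (\<lambda>z. z \<noteq> (0, 0)) (pmf_of_set {(0::bit, 1::bit), (1, 0), (1, 1)})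
      = map_pmf (\<lambda>_. True) (pmf_of_set {(0::bit, 1::bit), (1, 0), (1, 1)})"
    by (rule map_pmf_cong) auto
  then have "map_pmf (\<lambda>z. z \<noteq> (0, 0)) (pmf_of_set {(0::bit, 1::bit), (1, 0), (1, 1)})
      = return_pmf True"
    by simp
  then show ?thesis
    unfolding pauli_pmf_def map_bind_pmf
    by (subst bind_pmf_cong[where g = return_pmf]) (auto simp: bind_return_pmf')
qed

lemma prob_noise_nontrivial_at:
  assumes "0 \<le> p" "p \<le> 1" "j < n"
  shows "measure_pmf.prob (noise p n) (nontrivial_at n j) = p"
proof -
  let ?qubits = "Pi_pmf {..<n} (0, 0) (\<lambda>_. pauli_pmf p)"
  have "measure_pmf.prob (noise p n) (nontrivial_at n j)
      = measure_pmf.prob (map_pmf (\<lambda>z. z \<noteq> (0, 0)) (map_pmf (\<lambda>P. P j) ?qubits)) {True}"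
    unfolding noise_def using \<open>j < n\<close> by (auto simp: nontrivial_at_def prod_eq_iff intro!: arg_cong2[where f = "measure_pmf.prob"])
  also have "\<dots> = p"
    using assms by (simp add: Pi_pmf_component map_pmf_pauli_nontrivial measure_pmf_single)
  finally show ?thesis .
qed

lemma measure_pmf_prob_pair_Times:
  "measure_pmf.prob (pair_pmf M N) (A \<times> B) = measure_pmf.prob M A * measure_pmf.prob N B"
proof -
  let ?f = "\<lambda>x. x \<in> A" and ?g = "\<lambda>y. y \<in> B"
  have "measure_pmf.prob (pair_pmf M N) (A \<times> B)
      = measure_pmf.prob (map_pmf (\<lambda>(a, b). (?f a, ?g b)) (pair_pmf M N)) ({True} \<times> {True})"
    by (auto intro!: arg_cong2[where f = "measure_pmf.prob"])
  also have "\<dots> = measure_pmf.prob (map_pmf ?f M) {True} * measure_pmf.prob (map_pmf ?g N) {True}"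
    unfolding map_pair by (rule measure_pmf_prob_product) auto
  also have "\<dots> = measure_pmf.prob M A * measure_pmf.prob N B"
    by (simp add: vimage_def)
  finally show ?thesis .
qed

lemma prob_sympl_noise_nonzero_le:
  assumes "0 \<le> p" "p \<le> 1" "0 \<le> q" "q \<le> 1"
  shows "measure_pmf.prob (pair_pmf (noise p n) (noise q n)) {(e, f). sympl n f e \<noteq> 0}
         \<le> real n * p * q"
proof -
  let ?M = "pair_pmf (noise p n) (noise q n)"
  have "{(e, f). sympl n f e \<noteq> 0} \<subseteq> (\<Union>j<n. nontrivial_at n j \<times> nontrivial_at n j)"
    using sympl_nonzero_imp_common_nontrivial_at by fast
  then have "measure_pmf.prob ?M {(e, f). sympl n f e \<noteq> 0}
      \<le> measure_pmf.prob ?M (\<Union>j<n. nontrivial_at n j \<times> nontrivial_at n j)"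
    by (rule measure_pmf.finite_measure_mono) simp
  also have "\<dots> \<le> (\<Sum>j<n. measure_pmf.prob ?M (nontrivial_at n j \<times> nontrivial_at n j))"
    by (rule measure_pmf.finite_measure_subadditive_finite) auto
  also have "\<dots> = (\<Sum>j<n. p * q)"
    using assms by (simp add: measure_pmf_prob_pair_Times prob_noise_nontrivial_at)
  finally show ?thesis by simp
qed

lemma prob_Dec_correct_ge:
  assumes "0 \<le> p" "p \<le> 1"
  shows "measure_pmf.prob
           (do { (pk, sk) \<leftarrow> Gen p n; ct \<leftarrow> Enc p n pk \<mu>; return_pmf (Dec n sk ct) }) {\<mu>}
         \<ge> 1 - real n * p\<^sup>2"
proof -
  let ?M = "pair_pmf (noise p n) (noise p n)"
  let ?fail = "{(e, f). sympl n f e \<noteq> 0}"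
  have "(\<lambda>(e, f). sympl n f e + \<mu>) -` {\<mu>} = UNIV - ?fail"
    by (auto simp: add.commute[of _ \<mu>])
  then have "measure_pmf.prob
           (do { (pk, sk) \<leftarrow> Gen p n; ct \<leftarrow> Enc p n pk \<mu>; return_pmf (Dec n sk ct) }) {\<mu>}
      = 1 - measure_pmf.prob ?M ?fail"
    using measure_pmf.prob_compl[of ?fail ?M] by (simp add: Gen_Enc_Dec_eq)
  moreover have "measure_pmf.prob ?M ?fail \<le> real n * p\<^sup>2"
    using prob_sympl_noise_nonzero_le[OF assms assms] by (simp add: power2_eq_square mult.assoc)
  ultimately show ?thesis by simp
qed

lemma scaled_inverse_sqrt_in_bigtheta:
  assumes "c \<noteq> 0"
  shows "(\<lambda>n. c / sqrt (real n)) \<in> \<Theta>(\<lambda>n. 1 / sqrt (real n))"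
  using landau_theta.cmult_in_iff[OF assms, of "\<lambda>n. 1 / sqrt (real n)"] by simp

theorem theorem5p2:
  shows "\<forall>\<delta>::real. \<delta> > 0 \<longrightarrow>
    (\<exists>p :: nat \<Rightarrow> real. p \<in> \<Theta>(\<lambda>n. 1 / sqrt (real n)) \<and> (\<forall>n. 0 \<le> p n \<and> p n \<le> 1) \<and>
      (\<forall>n (\<mu>::bit).
         measure_pmf.prob
           (do { (pk, sk) \<leftarrow> Gen (p n) n; ct \<leftarrow> Enc (p n) n pk \<mu>; return_pmf (Dec n sk ct) })
           {\<mu>} \<ge> 1 - \<delta>))"
proof (intro allI impI)
  fix \<delta> :: real
  assume "\<delta> > 0"
  define c where "c = min 1 (sqrt \<delta>)"
  define p where "p n = c / sqrt (real n)" for n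
  have c: "0 < c" "c \<le> 1" "c\<^sup>2 \<le> \<delta>"
    using \<open>\<delta> > 0\<close> by (auto simp: c_def min_def power_le_one)
  have p_range: "0 \<le> p n \<and> p n \<le> 1" for n
    using c by (cases "n = 0") (auto simp: p_def divide_le_eq intro: order_trans[of c 1])
  have failure_bound: "real n * (p n)\<^sup>2 \<le> \<delta>" for n
    using c \<open>\<delta> > 0\<close> by (cases "n = 0") (auto simp: p_def power_divide)
  have "1 - \<delta> \<le> measure_pmf.prob
      (do { (pk, sk) \<leftarrow> Gen (p n) n; ct \<leftarrow> Enc (p n) n pk \<mu>; return_pmf (Dec n sk ct) }) {\<mu>}"
    for n \<mu>
    using prob_Dec_correct_ge[of "p n" n \<mu>] p_range[of n] failure_bound[of n] by linarith
  moreover have "p \<in> \<Theta>(\<lambda>n. 1 / sqrt (real n))"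
    unfolding p_def using c by (intro scaled_inverse_sqrt_in_bigtheta) simp
  ultimately show "\<exists>p :: nat \<Rightarrow> real. p \<in> \<Theta>(\<lambda>n. 1 / sqrt (real n)) \<and> (\<forall>n. 0 \<le> p n \<and> p n \<le> 1) \<and>
      (\<forall>n (\<mu>::bit).
         measure_pmf.prob
           (do { (pk, sk) \<leftarrow> Gen (p n) n; ct \<leftarrow> Enc (p n) n pk \<mu>; return_pmf (Dec n sk ct) })
           {\<mu>} \<ge> 1 - \<delta>)"
    using p_range by blast
qed

end
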